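(* Let $\mathcal{G}\subset\mathcal{S}$ and let $\mathcal{G}_H^0$ be its harmonic analogue. Then: (i) $\mathcal{G}_H^0\subset\mathcal{SS}_H^0$; (ii) if $f\in\mathcal{S}\cap\mathcal{G}_H^0$, then $f\in\mathcal{G}$; (iii) if $f=h+\bar g\in\mathcal{G}_H^0$, then $f_\lambda=h+\lambda\bar g\in\mathcal{G}_H^0$ for each $\lambda\in\mathbb{C}$ with $|\lambda|=1$; (iv) if $\mathcal{J}\subset\mathcal{G}$, then $\mathcal{J}_H^0\subset\mathcal{G}_H^0$, where $\mathcal{J}_H^0$ is the harmonic analogue of $\mathcal{J}$.
   Context: $\mathbb{D}=\{z\in\mathbb{C}:|z|<1\}$. $\mathcal{S}$ is the class of analytic univalent functions $f$ in $\mathbb{D}$ with $f(0)=0$, $f'(0)=1$. $\mathcal{H}$ is the class of complex-valued harmonic $f$ in $\mathbb{D}$ with $f(0)=0$, $f_z(0)=1$, $f_{\bar z}(0)=0$; such $f$ are written $f=h+\bar g$ with $h,g$ analytic. $\mathcal{S}_H^0\subset\mathcal{H}$ consists of the univalent sense-preserving ones ($|g'|<|h'|$ in $\mathbb{D}$). For $\mathcal{G}\subset\mathcal{S}$, its harmonic analogue $\mathcal{G}_H^0$ is the class of harmonic functions $f=h+\bar g$ ($h,g$ analytic in $\mathbb{D}$) such that $h+\epsilon g\in\mathcal{G}$ for every $\epsilon\in\mathbb{C}$ with $|\epsilon|=1$. A sense-preserving harmonic map $f=h+\bar g$ is stable univalent if $h+\lambda\bar g$ is univalent in $\mathbb{D}$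 for every $|\lambda|=1$; $\mathcal{SS}_H^0$ is the class of stable univalent functions in $\mathcal{S}_H^0$. *)

theory Defs
  imports "HOL-Analysis.Analysis"
begin

text \<open>Functions on the unit disk are represented as total functions complex => complex
  that are extended by 0 outside the disk, so that a function on the disk is identified
  with exactly one HOL function.\<close>

definition unit_disk :: "complex set" where
  "unit_disk = ball 0 1"

definition on_disk :: "(complex \<Rightarrow> complex) \<Rightarrow> complex \<Rightarrow> complex" where
  "on_disk \<phi> = (\<lambda>z. if z \<in> unit_disk then \<phi> z else 0)"

definition class_S :: "(complex \<Rightarrow> complex) set" where
  "class_S = {f. f holomorphic_on unit_disk \<and> inj_on f unit_disk \<and> f 0 = 0 \<and>
                 deriv f 0 = 1 \<and> (\<forall>z. z \<notin> unit_disk \<longrightarrow> f z = 0)}"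

definition harm :: "(complex \<Rightarrow> complex) \<Rightarrow> (complex \<Rightarrow> complex) \<Rightarrow> complex \<Rightarrow> complex" where
  "harm h g = on_disk (\<lambda>z. h z + cnj (g z))"

text \<open>The class S_H^0: univalent sense-preserving harmonic f = h + conj g with
  f(0) = 0, f_z(0) = h'(0) = 1, f_{conj z}(0) = conj (g'(0)) = 0.\<close>
definition class_SH0 :: "(complex \<Rightarrow> complex) set" where
  "class_SH0 = {f. \<exists>h g. h holomorphic_on unit_disk \<and> g holomorphic_on unit_disk \<and>
      f = harm h g \<and> f 0 = 0 \<and> deriv h 0 = 1 \<and> deriv g 0 = 0 \<and>
      inj_on f unit_disk \<and> (\<forall>z\<in>unit_disk. norm (deriv g z) < norm (deriv h z))}"

definition class_SSH0 :: "(complex \<Rightarrow> complex) set" where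
  "class_SSH0 = {f \<in> class_SH0. \<exists>h g. h holomorphic_on unit_disk \<and> g holomorphic_on unit_disk \<and>
      f = harm h g \<and> (\<forall>z\<in>unit_disk. norm (deriv g z) < norm (deriv h z)) \<and>
      (\<forall>lam. norm lam = 1 \<longrightarrow> inj_on (\<lambda>z. h z + lam * cnj (g z)) unit_disk)}"

definition harmonic_analogue :: "(complex \<Rightarrow> complex) set \<Rightarrow> (complex \<Rightarrow> complex) set" where
  "harmonic_analogue G = {f. \<exists>h g. h holomorphic_on unit_disk \<and> g holomorphic_on unit_disk \<and>
      f = harm h g \<and> (\<forall>\<epsilon>. norm \<epsilon> = 1 \<longrightarrow> on_disk (\<lambda>z. h z + \<epsilon> * g z) \<in> G)}"

end

theory Submission
  imports Defs "HOL-Complex_Analysis.Complex_Analysis"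
begin

text \<open>Two observations carry the proof. First, if \<open>h + \<epsilon> g\<close> is univalent for every
  unimodular \<open>\<epsilon>\<close>, then so is \<open>h + \<lambda> conj g\<close>: a coincidence \<open>a = -\<lambda> conj b\<close> of the increments
  of \<open>h\<close> and \<open>g\<close> forces \<open>|a| = |b|\<close>, i.e. \<open>a + \<epsilon> b = 0\<close> for the unimodular \<open>\<epsilon> = -a/b\<close>; the same
  argument applied to derivatives shows that \<open>|g'| \<noteq> |h'|\<close>, and connectedness of the disk turns
  this into \<open>|g'| < |h'|\<close>. Second, the decomposition \<open>f = h + conj g\<close> is unique once \<open>g(0)\<close> is
  fixed, because a holomorphic function whose conjugate is holomorphic is constant (open
  mapping theorem).\<close>

lemma open_unit_disk: "open unit_disk"
  and connected_unit_disk: "connected unit_disk"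
  and zero_in_unit_disk: "0 \<in> unit_disk"
  by (auto simp: unit_disk_def convex_connected)

lemma on_disk_eq: "z \<in> unit_disk \<Longrightarrow> on_disk F z = F z"
  by (simp add: on_disk_def)

lemma on_disk_cong: "(\<And>z. z \<in> unit_disk \<Longrightarrow> F z = H z) \<Longrightarrow> on_disk F = on_disk H"
  by (auto simp: on_disk_def)

lemma deriv_on_disk: "z \<in> unit_disk \<Longrightarrow> deriv (on_disk F) z = deriv F z"
proof (rule deriv_cong_ev)
  assume "z \<in> unit_disk"
  then show "\<forall>\<^sub>F x in nhds z. on_disk F x = F x"
    using open_unit_disk by (auto intro: eventually_nhds_in_open eventually_mono simp: on_disk_eq)
qed simp

lemma class_S_eq_harm: "f \<in> class_S \<Longrightarrow> f = harm f (\<lambda>_. 0)"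
  by (auto simp: class_S_def harm_def on_disk_def)

lemma holomorphic_real_valued_imp_constant:
  assumes hol: "p holomorphic_on S" and S: "open S" "connected S"
    and real: "\<And>z. z \<in> S \<Longrightarrow> p z \<in> \<real>"
  shows "p constant_on S"
proof (rule ccontr)
  assume nc: "\<not> p constant_on S"
  then obtain z0 where z0: "z0 \<in> S"
    by (auto simp: constant_on_def)
  have "open (p ` S)"
    using open_mapping_thm[OF hol S S(1) subset_refl nc] .
  then obtain e where e: "e > 0" "ball (p z0) e \<subseteq> p ` S"
    using z0 openE by blast
  then have "p z0 + \<i> * of_real (e/2) \<in> p ` S"
    by (auto simp: dist_norm norm_mult)
  then obtain z where "z \<in> S" "p z = p z0 + \<i> * of_real (e/2)"
    by auto
  then have "z \<in> S" "Im (p z) = Im (p z0) + e/2"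
    by simp_all
  then show False
    using real z0 e(1) by (fastforce simp: complex_is_Real_iff)
qed

lemma holomorphic_eq_cnj_holomorphic_imp_constant:
  assumes a: "a holomorphic_on S" and b: "b holomorphic_on S" and S: "open S" "connected S"
    and eq: "\<And>z. z \<in> S \<Longrightarrow> a z = cnj (b z)"
  shows "b constant_on S"
proof -
  have "(\<lambda>z. b z + a z) constant_on S" "(\<lambda>z. \<i> * (b z - a z)) constant_on S"
    by (rule holomorphic_real_valued_imp_constant;
        auto intro!: holomorphic_intros a b S simp: eq complex_is_Real_iff)+
  then obtain c d where c: "\<forall>z\<in>S. b z + a z = c" and d: "\<forall>z\<in>S. \<i> * (b z - a z) = d"
    by (auto simp: constant_on_def)
  have "b z = (c - \<i> * d) / 2" if "z \<in> S" for z
  proof -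
    have "- \<i> * (\<i> * (b z - a z)) = - \<i> * d"
      using d that by simp
    then have "(b z + a z) + (b z - a z) = c - \<i> * d"
      using c that by simp
    then show ?thesis
      by (simp add: ac_simps)
  qed
  then show ?thesis
    unfolding constant_on_def by blast
qed

lemma harm_eqD:
  assumes hol: "h holomorphic_on unit_disk" "g holomorphic_on unit_disk"
      "h' holomorphic_on unit_disk" "g' holomorphic_on unit_disk"
    and eq: "harm h g = harm h' g'" and g0: "g 0 = g' 0" and z: "z \<in> unit_disk"
  shows "h z = h' z" "g z = g' z"
proof -
  have "(\<lambda>z. g' z - g z) constant_on unit_disk"
  proof (rule holomorphic_eq_cnj_holomorphic_imp_constant)
    fix w assume "w \<in> unit_disk"
    with fun_cong[OF eq, of w] show "h w - h' w = cnj (g' w - g w)"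
      by (simp add: harm_def on_disk_eq algebra_simps)
  qed (auto intro!: holomorphic_intros hol open_unit_disk connected_unit_disk)
  then have "g' z - g z = g' 0 - g 0"
    using z zero_in_unit_disk by (auto simp: constant_on_def)
  then show "g z = g' z"
    using g0 by simp
  then show "h z = h' z"
    using fun_cong[OF eq, of z] z by (simp add: harm_def on_disk_eq)
qed

lemma deriv_add_cmult:
  assumes "h holomorphic_on S" "g holomorphic_on S" "open S" "z \<in> S"
  shows "deriv (\<lambda>z. h z + c * g z) z = deriv h z + c * deriv g z"
proof -
  have "h field_differentiable at z" "g field_differentiable at z"
    using assms holomorphic_on_imp_differentiable_at by blast+
  then show ?thesis
    by (intro DERIV_imp_deriv DERIV_add DERIV_cmult field_differentiable_derivI)
qed

lemma norm_eq_imp_unimodular_cancel: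
  fixes a b :: complex
  assumes "norm a = norm b"
  obtains \<epsilon> where "norm \<epsilon> = 1" "a + \<epsilon> * b = 0"
proof (cases "b = 0")
  case True
  then show ?thesis
    using assms that[of 1] by simp
next
  case False
  then show ?thesis
    using assms that[of "- a / b"] by (simp add: norm_divide)
qed

lemma inj_on_add_cnj_mult:
  assumes inj: "\<And>\<epsilon>. norm \<epsilon> = 1 \<Longrightarrow> inj_on (\<lambda>z. h z + \<epsilon> * g z) S" and lam: "norm lam = 1"
  shows "inj_on (\<lambda>z. h z + lam * cnj (g z)) S"
proof (rule inj_onI)
  fix z1 z2 assume z: "z1 \<in> S" "z2 \<in> S"
    and eq: "h z1 + lam * cnj (g z1) = h z2 + lam * cnj (g z2)"
  define a where "a = h z1 - h z2"
  define b where "b = g z1 - g z2"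
  have "a = - lam * cnj b"
    using eq by (simp add: a_def b_def algebra_simps)
  then have "norm a = norm b"
    using lam by (simp add: norm_mult)
  then obtain \<epsilon> where "norm \<epsilon> = 1" "a + \<epsilon> * b = 0"
    by (rule norm_eq_imp_unimodular_cancel)
  then show "z1 = z2"
    using inj z by (auto simp: a_def b_def algebra_simps dest: inj_onD)
qed

lemma norm_less_on_connected:
  fixes a b :: "'a::topological_space \<Rightarrow> complex"
  assumes S: "connected S" and cont: "continuous_on S a" "continuous_on S b"
    and z0: "z0 \<in> S" "norm (b z0) < norm (a z0)"
    and nz: "\<And>\<epsilon> z. norm \<epsilon> = 1 \<Longrightarrow> z \<in> S \<Longrightarrow> a z + \<epsilon> * b z \<noteq> 0"
    and z: "z \<in> S"
  shows "norm (b z) < norm (a z)"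
proof (rule ccontr)
  define \<psi> where "\<psi> = (\<lambda>z. norm (a z) - norm (b z))"
  have \<psi>_nz: "\<psi> w \<noteq> 0" if "w \<in> S" for w
  proof
    assume "\<psi> w = 0"
    then have "norm (a w) = norm (b w)"
      by (simp add: \<psi>_def)
    then show False
      using nz \<open>w \<in> S\<close> by (metis norm_eq_imp_unimodular_cancel)
  qed
  assume "\<not> norm (b z) < norm (a z)"
  then have "\<psi> z < 0"
    using \<psi>_nz[OF z] by (simp add: \<psi>_def)
  have "connected (\<psi> ` S)"
    unfolding \<psi>_def by (intro connected_continuous_image continuous_intros cont S)
  then have "{\<psi> z..\<psi> z0} \<subseteq> \<psi> ` S"
    using z z0(1) by (intro connected_contains_Icc imageI)
  moreover have "0 \<in> {\<psi> z..\<psi> z0}"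
    using \<open>\<psi> z < 0\<close> z0(2) by (simp add: \<psi>_def)
  ultimately obtain w where "w \<in> S" "\<psi> w = 0"
    by (metis imageE subsetD)
  then show False
    using \<psi>_nz by blast
qed

context
  fixes G :: "(complex \<Rightarrow> complex) set" and h g :: "complex \<Rightarrow> complex"
  assumes G: "G \<subseteq> class_S"
    and hol: "h holomorphic_on unit_disk" "g holomorphic_on unit_disk"
    and combinations: "\<forall>\<epsilon>. norm \<epsilon> = 1 \<longrightarrow> on_disk (\<lambda>z. h z + \<epsilon> * g z) \<in> G"
begin

lemma combination_in_class_S: "norm \<epsilon> = 1 \<Longrightarrow> on_disk (\<lambda>z. h z + \<epsilon> * g z) \<in> class_S"
  using combinations G by blast

lemma inj_on_combination: "norm \<epsilon> = 1 \<Longrightarrow> inj_on (\<lambda>z. h z + \<epsilon> * g z) unit_disk"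
  using combination_in_class_S by (auto simp: class_S_def on_disk_eq cong: inj_on_cong)

lemma combination_normalized:
  assumes "norm \<epsilon> = 1"
  shows "h 0 + \<epsilon> * g 0 = 0" "deriv h 0 + \<epsilon> * deriv g 0 = 1"
  using combination_in_class_S[OF assms] zero_in_unit_disk
    deriv_add_cmult[OF hol open_unit_disk zero_in_unit_disk]
  by (auto simp: class_S_def on_disk_eq deriv_on_disk)

lemma components_normalized: "h 0 = 0" "g 0 = 0" "deriv h 0 = 1" "deriv g 0 = 0"
  using combination_normalized[of 1] combination_normalized[of "-1"]
  by (simp_all add: complex_eq_iff)

lemma deriv_combination_nonzero:
  assumes "norm \<epsilon> = 1" "z \<in> unit_disk"
  shows "deriv h z + \<epsilon> * deriv g z \<noteq> 0"
proof -
  have "deriv (\<lambda>z. h z + \<epsilon> * g z) z \<noteq> 0"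
    using assms hol open_unit_disk inj_on_combination
    by (intro holomorphic_injective_imp_regular) (auto intro!: holomorphic_intros)
  then show ?thesis
    using deriv_add_cmult[OF hol open_unit_disk assms(2)] by simp
qed

lemma deriv_norm_less:
  assumes "z \<in> unit_disk"
  shows "norm (deriv g z) < norm (deriv h z)"
proof (rule norm_less_on_connected[OF connected_unit_disk _ _ zero_in_unit_disk _
      deriv_combination_nonzero assms])
  show "continuous_on unit_disk (deriv h)" "continuous_on unit_disk (deriv g)"
    using hol open_unit_disk by (auto intro: holomorphic_on_imp_continuous_on holomorphic_deriv)
  show "norm (deriv g 0) < norm (deriv h 0)"
    using components_normalized by simp
qed

lemma harm_in_class_SSH0: "harm h g \<in> class_SSH0"
proof -
  have stable: "inj_on (\<lambda>z. h z + lam * cnj (g z)) unit_disk" if "norm lam = 1" for lam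
    using inj_on_add_cnj_mult[OF inj_on_combination that] .
  have "inj_on (harm h g) unit_disk"
    using stable[of 1] by (simp add: harm_def on_disk_eq cong: inj_on_cong)
  moreover have "harm h g 0 = 0"
    using components_normalized zero_in_unit_disk by (simp add: harm_def on_disk_eq)
  ultimately have "harm h g \<in> class_SH0"
    unfolding class_SH0_def using hol components_normalized deriv_norm_less by blast
  then show ?thesis
    unfolding class_SSH0_def using hol deriv_norm_less stable by blast
qed

lemma harm_rotate_in_harmonic_analogue:
  assumes "norm lam = 1"
  shows "on_disk (\<lambda>z. h z + lam * cnj (g z)) \<in> harmonic_analogue G"
proof -
  have "on_disk (\<lambda>z. h z + \<epsilon> * (cnj lam * g z)) \<in> G" if "norm \<epsilon> = 1" for \<epsilon>
    using combinations[rule_format, of "\<epsilon> * cnj lam"] that assms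
    by (simp add: norm_mult mult.assoc)
  moreover have "(\<lambda>z. cnj lam * g z) holomorphic_on unit_disk"
    using hol by (intro holomorphic_intros)
  moreover have "on_disk (\<lambda>z. h z + lam * cnj (g z)) = harm h (\<lambda>z. cnj lam * g z)"
    by (simp add: harm_def)
  ultimately show ?thesis
    unfolding harmonic_analogue_def using hol by blast
qed

end

lemma harm_in_harmonic_analogueD:
  assumes G: "G \<subseteq> class_S" and hol: "h holomorphic_on unit_disk" "g holomorphic_on unit_disk"
    and g0: "g 0 = 0" and f: "harm h g \<in> harmonic_analogue G"
  shows "\<forall>\<epsilon>. norm \<epsilon> = 1 \<longrightarrow> on_disk (\<lambda>z. h z + \<epsilon> * g z) \<in> G"
proof -
  obtain h' g' where hol': "h' holomorphic_on unit_disk" "g' holomorphic_on unit_disk"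
    and eq: "harm h g = harm h' g'"
    and comb': "\<forall>\<epsilon>. norm \<epsilon> = 1 \<longrightarrow> on_disk (\<lambda>z. h' z + \<epsilon> * g' z) \<in> G"
    using f unfolding harmonic_analogue_def by blast
  have "g 0 = g' 0"
    using g0 components_normalized[OF G hol' comb'] by simp
  note same = harm_eqD[OF hol hol' eq this]
  have "on_disk (\<lambda>z. h z + \<epsilon> * g z) = on_disk (\<lambda>z. h' z + \<epsilon> * g' z)" for \<epsilon>
    by (intro on_disk_cong) (simp add: same)
  then show ?thesis
    using comb' by simp
qed

theorem theorem2p2:
  fixes G :: "(complex \<Rightarrow> complex) set"
  assumes "G \<subseteq> class_S"
  shows "harmonic_analogue G \<subseteq> class_SSH0
    \<and> (\<forall>f. f \<in> class_S \<and> f \<in> harmonic_analogue G \<longrightarrow> f \<in> G)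
    \<and> (\<forall>h g lam. h holomorphic_on unit_disk \<and> g holomorphic_on unit_disk \<and> h 0 = 0 \<and> g 0 = 0 \<and>
           harm h g \<in> harmonic_analogue G \<and> norm lam = 1 \<longrightarrow>
           on_disk (\<lambda>z. h z + lam * cnj (g z)) \<in> harmonic_analogue G)
    \<and> (\<forall>J. J \<subseteq> G \<longrightarrow> harmonic_analogue J \<subseteq> harmonic_analogue G)"
proof (intro conjI allI impI subsetI)
  fix f assume "f \<in> harmonic_analogue G"
  then show "f \<in> class_SSH0"
    unfolding harmonic_analogue_def using harm_in_class_SSH0[OF assms] by blast
next
  fix f assume f: "f \<in> class_S \<and> f \<in> harmonic_analogue G"
  then have hol: "f holomorphic_on unit_disk" and an: "harm f (\<lambda>_. 0) \<in> harmonic_analogue G"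
    using class_S_eq_harm by (auto simp: class_S_def)
  have "on_disk (\<lambda>z. f z + 1 * 0) \<in> G"
    using harm_in_harmonic_analogueD[OF assms hol holomorphic_on_const refl an, rule_format, of 1]
    by simp
  then show "f \<in> G"
    using f class_S_eq_harm by (simp add: harm_def)
next
  fix h g :: "complex \<Rightarrow> complex" and lam :: complex
  assume "h holomorphic_on unit_disk \<and> g holomorphic_on unit_disk \<and> h 0 = 0 \<and> g 0 = 0 \<and>
    harm h g \<in> harmonic_analogue G \<and> norm lam = 1"
  then have hol: "h holomorphic_on unit_disk" "g holomorphic_on unit_disk"
    and "g 0 = 0" "harm h g \<in> harmonic_analogue G" "norm lam = 1"
    by simp_all
  then show "on_disk (\<lambda>z. h z + lam * cnj (g z)) \<in> harmonic_analogue G"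
    using harm_rotate_in_harmonic_analogue[OF assms hol harm_in_harmonic_analogueD[OF assms hol]]
    by blast
next
  fix J f assume "J \<subseteq> G" "f \<in> harmonic_analogue J"
  then show "f \<in> harmonic_analogue G"
    unfolding harmonic_analogue_def by blast
qed

end
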